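(* Let $A:\mathbb{R}^n\to\mathbb{R}^{n\times n}$ be symmetric-matrix valued, three times continuously differentiable at every $v\neq 0$, with $A(\alpha v)=A(v)$ for all $\alpha\in\mathbb{R}\setminus\{0\}$. Let $J(v):=\frac{\partial}{\partial v}(A(v)v)$, and for $\sigma\in\mathbb{R}$ define $\varphi(v):=\psi(v)/\|\psi(v)\|_2$ with $\psi(v):=(J(v)-\sigma I)^{-1}v$ (whenever $J(v)-\sigma I$ is nonsingular). Suppose $(\lambda_*,v_* )$ satisfies $A(v_* )v_*=\lambda_*v_*$ with $\|v_*\|_2=1$, and let $\sigma\in\mathbb{R}$ be such that $J(v_* )-\sigma I$ is nonsingular. Then $$\varphi'(v_* )=|\lambda_*-\sigma|\,(I-v_*v_*^T)\,(J(v_* )-\sigma I)^{-1}.$$ Moreover, if the iterates $v_{k+1}=\varphi(v_k)$ (i.e., $v_{k+1}=(J(v_k)-\sigma I)^{-1}v_k/\|(J(v_k)-\sigma I)^{-1}v_k\|_2$) are such that $J(v_k)-\sigma I$ is nonsingular for all $k$, then $$v_{k+1}\mp v_*=\varphi'(v_* )(v_k-v_* )+O(\|v_k-v_*\|^2),$$ where the sign is "$-$" (i.e., $v_{k+1}-v_*$) if $\sigma<\lambda_*$ and "$+$" (i.e., $v_{k+1}+v_*$) if $\sigma>\lambda_*$.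
   Context: $\varphi'(v)$ denotes the Jacobian matrix of $\varphi$ at $v$; $\|\cdot\|_2$ is the Euclidean norm; the $O$-term refers to $v_k\to v_*$. *)

theory Defs
  imports "HOL-Analysis.Analysis"
begin

text \<open>k times continuously differentiable on a set S (intended: S open), via iterated
  partial (directional along the standard basis) derivatives of the Frechet derivative.\<close>
fun Ck_on :: "nat \<Rightarrow> 'a::euclidean_space set \<Rightarrow> ('a \<Rightarrow> 'b::real_normed_vector) \<Rightarrow> bool" where
  "Ck_on 0 S f = continuous_on S f"
| "Ck_on (Suc k) S f = (f differentiable_on S \<and>
      (\<forall>b\<in>Basis. Ck_on k S (\<lambda>x. frechet_derivative f (at x) b)))"

definition Jmat :: "(real^'n \<Rightarrow> real^'n^'n) \<Rightarrow> real^'n \<Rightarrow> real^'n^'n" where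
  "Jmat A v = jacobian (\<lambda>w. A w *v w) (at v)"

definition psi :: "(real^'n \<Rightarrow> real^'n^'n) \<Rightarrow> real \<Rightarrow> real^'n \<Rightarrow> real^'n" where
  "psi A \<sigma> v = matrix_inv (Jmat A v - \<sigma> *\<^sub>R mat 1) *v v"

definition phi :: "(real^'n \<Rightarrow> real^'n^'n) \<Rightarrow> real \<Rightarrow> real^'n \<Rightarrow> real^'n" where
  "phi A \<sigma> v = (1 / norm (psi A \<sigma> v)) *\<^sub>R psi A \<sigma> v"

definition outer :: "real^'n \<Rightarrow> real^'n \<Rightarrow> real^'n^'n" where
  "outer v w = (\<chi> i j. v $ i * w $ j)"

end

theory Submission
  imports Defs
begin

text \<open>
  Put \<open>\<mu> = lam - \<sigma>\<close>. Since \<open>A\<close> is invariant under scaling, its derivative vanishes in the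
  radial direction, so \<open>J(w) w = A(w) w\<close>; hence \<open>(J(vstar) - \<sigma> I) vstar = \<mu> vstar\<close> and
  \<open>\<mu> \<noteq> 0\<close>. As \<open>A\<close> is \<open>C\<^sup>2\<close>, \<open>J\<close> is Lipschitz near \<open>vstar\<close>, and linearizing
  \<open>w \<mapsto> A(w) w\<close> at \<open>v\<close> gives \<open>J(v) vstar = lam vstar + O(\<parallel>v - vstar\<parallel>\<^sup>2)\<close>. Together with
  a perturbation bound for \<open>(J(v) - \<sigma> I)\<inverse>\<close> this yields
  \<open>\<psi>(v) = vstar / \<mu> + (J(vstar) - \<sigma> I)\<inverse> (v - vstar) + O(\<parallel>v - vstar\<parallel>\<^sup>2)\<close>.
  Finally, normalizing \<open>vstar / \<mu> + d\<close> gives \<open>sgn \<mu> vstar + \<bar>\<mu>\<bar> (I - vstar vstar\<^sup>T) d + O(\<parallel>d\<parallel>\<^sup>2)\<close>,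
  so \<open>\<phi>(v) = sgn \<mu> vstar + \<phi>'(vstar) (v - vstar) + O(\<parallel>v - vstar\<parallel>\<^sup>2)\<close>, which contains both
  the formula for the Jacobian and the iteration estimate.
\<close>

lemma Ck_on_SucD: "Ck_on (Suc k) S f \<Longrightarrow> Ck_on k S f"
proof (induction k arbitrary: f)
  case 0
  then show ?case by (simp add: differentiable_imp_continuous_on)
next
  case (Suc k)
  then show ?case by (metis Ck_on.simps(2))
qed

lemma matrix_inv_mult_cancel:
  fixes M :: "real^'n^'n"
  assumes "invertible M"
  shows matrix_inv_mult_cancel_left: "matrix_inv M *v (M *v x) = x"
    and matrix_inv_mult_cancel_right: "M *v (matrix_inv M *v x) = x"
proof -
  have "\<exists>M'. M ** M' = mat 1 \<and> M' ** M = mat 1"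
    using assms unfolding invertible_def by blast
  from someI_ex[OF this] have "M ** matrix_inv M = mat 1" "matrix_inv M ** M = mat 1"
    unfolding matrix_inv_def by auto
  then show "matrix_inv M *v (M *v x) = x" "M *v (matrix_inv M *v x) = x"
    by (simp_all add: matrix_vector_mul_assoc)
qed

lemma bounded_bilinear_matrix_vector_mult:
  "bounded_bilinear (\<lambda>(M::real^'n^'m) (x::real^'n). M *v x)"
proof -
  have "bilinear (\<lambda>(M::real^'n^'m) (x::real^'n). M *v x)"
    unfolding bilinear_def
    by (auto intro!: linearI simp: matrix_vector_mult_def vec_eq_iff sum.distrib algebra_simps sum_distrib_left)
  then show ?thesis
    using bilinear_conv_bounded_bilinear by blast
qed

lemma outer_mult_vector: "outer v w *v y = (w \<bullet> y) *\<^sub>R v"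
  by (simp add: outer_def matrix_vector_mult_def vec_eq_iff inner_vec_def sum_distrib_left algebra_simps)

lemma projection_matrix_mult:
  "(c *\<^sub>R ((mat 1 - outer v v) ** N)) *v h = c *\<^sub>R (N *v h - (v \<bullet> (N *v h)) *\<^sub>R v)"
  by (simp add: scaleR_matrix_vector_assoc[symmetric] matrix_vector_mul_assoc[symmetric]
      matrix_vector_mult_diff_rdistrib outer_mult_vector)

lemma norm_linear_le_Basis:
  fixes L :: "'a::euclidean_space \<Rightarrow> 'b::real_normed_vector"
  assumes "linear L"
  shows "norm (L h) \<le> norm h * (\<Sum>b\<in>Basis. norm (L b))"
proof -
  have "L h = L (\<Sum>b\<in>Basis. (h \<bullet> b) *\<^sub>R b)"
    by (simp add: euclidean_representation)
  also have "\<dots> = (\<Sum>b\<in>Basis. (h \<bullet> b) *\<^sub>R L b)"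
    using assms by (simp add: linear_sum linear_scale)
  finally have "norm (L h) \<le> (\<Sum>b\<in>Basis. norm ((h \<bullet> b) *\<^sub>R L b))"
    by (metis norm_sum)
  also have "\<dots> \<le> (\<Sum>b\<in>Basis. norm h * norm (L b))"
    by (intro sum_mono) (auto intro!: mult_right_mono simp: Basis_le_norm)
  finally show ?thesis by (simp add: sum_distrib_left)
qed

lemma has_derivative_quadratic_remainder:
  fixes f :: "'a::real_normed_vector \<Rightarrow> 'b::real_normed_vector"
  assumes "bounded_linear D" "\<delta> > 0"
    and remainder: "\<And>x. norm (x - a) < \<delta> \<Longrightarrow> norm (f x - f a - D (x - a)) \<le> C * (norm (x - a))\<^sup>2"
  shows "(f has_derivative D) (at a)"
  unfolding has_derivative_at
proof
  show "bounded_linear D" by fact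
  show "((\<lambda>h. norm (f (a + h) - f a - D h) / norm h) \<longlongrightarrow> 0) (at 0)"
  proof (rule Lim_null_comparison)
    show "\<forall>\<^sub>F h in at 0. norm (norm (f (a + h) - f a - D h) / norm h) \<le> C * norm h"
      unfolding eventually_at
    proof (intro exI[of _ \<delta>] conjI ballI impI)
      fix h :: 'a assume h: "h \<noteq> 0 \<and> dist h 0 < \<delta>"
      then have "norm (f (a + h) - f a - D h) / norm h \<le> C * (norm h)\<^sup>2 / norm h"
        using remainder[of "a + h"] by (simp add: divide_right_mono)
      also have "\<dots> = C * norm h"
        using h by (simp add: power2_eq_square)
      finally show "norm (norm (f (a + h) - f a - D h) / norm h) \<le> C * norm h"
        by simp
    qed fact
    show "((\<lambda>h. C * norm h) \<longlongrightarrow> 0) (at 0)"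
      by (intro tendsto_mult_right_zero tendsto_norm_zero tendsto_ident_at)
  qed
qed

lemma frechet_derivative_bounded_on_compact:
  fixes g :: "'a::euclidean_space \<Rightarrow> 'b::real_normed_vector"
  assumes "open S" "g differentiable_on S"
    and partials: "\<And>b. b \<in> Basis \<Longrightarrow> continuous_on S (\<lambda>x. frechet_derivative g (at x) b)"
    and "compact K" "K \<subseteq> S"
  obtains B where "B > 0" "\<And>x h. x \<in> K \<Longrightarrow> norm (frechet_derivative g (at x) h) \<le> B * norm h"
proof -
  have "continuous_on K (\<lambda>x. \<Sum>b\<in>Basis. norm (frechet_derivative g (at x) b))"
    using partials \<open>K \<subseteq> S\<close> by (intro continuous_intros) (auto intro: continuous_on_subset)
  then have "bounded ((\<lambda>x. \<Sum>b\<in>Basis. norm (frechet_derivative g (at x) b)) ` K)"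
    using \<open>compact K\<close> compact_continuous_image compact_imp_bounded by blast
  then obtain B where "B > 0" and B: "\<And>x. x \<in> K \<Longrightarrow> (\<Sum>b\<in>Basis. norm (frechet_derivative g (at x) b)) \<le> B"
    unfolding bounded_pos by fastforce
  have "norm (frechet_derivative g (at x) h) \<le> B * norm h" if "x \<in> K" for x h
  proof -
    have "g differentiable (at x)"
      using assms(1,2,5) that by (meson differentiable_on_eq_differentiable_at subsetD)
    then have "linear (frechet_derivative g (at x))"
      using frechet_derivative_works has_derivative_linear by blast
    then have "norm (frechet_derivative g (at x) h) \<le> norm h * (\<Sum>b\<in>Basis. norm (frechet_derivative g (at x) b))"
      by (rule norm_linear_le_Basis)
    also have "\<dots> \<le> B * norm h"
      using B[OF that] by (metis mult.commute mult_left_mono norm_ge_zero)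
    finally show ?thesis .
  qed
  with \<open>B > 0\<close> show thesis by (rule that)
qed

lemma lipschitz_on_continuous_partials:
  fixes g :: "'a::euclidean_space \<Rightarrow> 'b::real_normed_vector"
  assumes "open S" "g differentiable_on S"
    and "\<And>b. b \<in> Basis \<Longrightarrow> continuous_on S (\<lambda>x. frechet_derivative g (at x) b)"
    and "compact K" "convex K" "K \<subseteq> S"
  obtains L where "L-lipschitz_on K g"
proof -
  obtain B where "B > 0" and B: "\<And>x h. x \<in> K \<Longrightarrow> norm (frechet_derivative g (at x) h) \<le> B * norm h"
    using frechet_derivative_bounded_on_compact assms(1-4,6) by metis
  have deriv: "(g has_derivative frechet_derivative g (at x)) (at x within K)" if "x \<in> K" for x
    using assms(1,2,6) that
    by (meson differentiable_on_eq_differentiable_at frechet_derivative_works has_derivative_at_withinI subsetD)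
  have "norm (g x - g y) \<le> B * norm (x - y)" if "x \<in> K" "y \<in> K" for x y
  proof (rule differentiable_bound[OF \<open>convex K\<close> deriv _ that])
    show "onorm (frechet_derivative g (at z)) \<le> B" if "z \<in> K" for z
      using B[OF that] by (intro onorm_le) simp
  qed
  with \<open>B > 0\<close> have "B-lipschitz_on K g"
    by (intro lipschitz_onI) (auto simp: dist_norm)
  then show thesis by (rule that)
qed

lemma linear_family_lipschitz_Basis:
  fixes D :: "'a::real_normed_vector \<Rightarrow> 'c::euclidean_space \<Rightarrow> 'b::real_normed_vector" and L :: real
  assumes "linear (D w)" "linear (D w')"
    and "\<And>b. b \<in> Basis \<Longrightarrow> L-lipschitz_on K (\<lambda>w. D w b)" and "w \<in> K" "w' \<in> K"
  shows "norm (D w y - D w' y) \<le> DIM('c) * L * norm (w - w') * norm y"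
proof -
  have "norm (D w y - D w' y) \<le> norm y * (\<Sum>b\<in>Basis. norm (D w b - D w' b))"
    using norm_linear_le_Basis[OF linear_compose_sub[OF assms(1,2)]] by simp
  also have "\<dots> \<le> norm y * (\<Sum>b\<in>(Basis::'c set). L * norm (w - w'))"
    using assms(3-5) by (intro mult_left_mono sum_mono lipschitz_on_normD) auto
  finally show ?thesis by (simp add: mult_ac)
qed

lemma linearization_error_lipschitz_derivative:
  fixes F :: "'a::real_normed_vector \<Rightarrow> 'b::real_normed_vector"
  assumes "convex K" "a \<in> K" "b \<in> K" "L \<ge> 0"
    and deriv: "\<And>x. x \<in> K \<Longrightarrow> (F has_derivative F' x) (at x within K)"
    and lipschitz: "\<And>x h. x \<in> K \<Longrightarrow> norm (F' x h - F' b h) \<le> L * norm (x - b) * norm h"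
  shows "norm (F b - F a - F' b (b - a)) \<le> L * (norm (b - a))\<^sup>2"
proof -
  have seg: "closed_segment a b \<subseteq> K"
    using assms(1-3) by (rule closed_segment_subset[rotated 2])
  have "onorm (F' x - F' b) \<le> L * norm (b - a)" if "x \<in> closed_segment a b" for x
  proof (rule onorm_bound)
    show "0 \<le> L * norm (b - a)" using \<open>L \<ge> 0\<close> by simp
    fix h
    have "norm (F' x h - F' b h) \<le> L * norm (x - b) * norm h"
      using lipschitz seg that by blast
    also have "\<dots> \<le> L * norm (b - a) * norm h"
      using segment_bound(2)[OF that] \<open>L \<ge> 0\<close> by (intro mult_right_mono mult_left_mono) auto
    finally show "norm ((F' x - F' b) h) \<le> L * norm (b - a) * norm h" by simp
  qed
  moreover have "a + t *\<^sub>R (b - a) \<in> closed_segment a b" if "t \<in> {0..1}" for t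
    using that by (auto simp: closed_segment_def algebra_simps intro!: exI[of _ t])
  ultimately have "norm (F b - F a - F' b (b - a)) \<le> norm (b - a) * (L * norm (b - a))"
    using seg by (intro differentiable_bound_linearization[where S = "closed_segment a b"])
      (auto intro: has_derivative_subset[OF deriv])
  then show ?thesis by (simp add: power2_eq_square mult_ac)
qed

lemma has_derivative_matrix_vector_self:
  fixes A :: "real^'n \<Rightarrow> real^'n^'m"
  assumes "A differentiable (at w)"
  shows "((\<lambda>w. A w *v w) has_derivative (\<lambda>h. A w *v h + frechet_derivative A (at w) h *v w)) (at w)"
  using bounded_bilinear.FDERIV[OF bounded_bilinear_matrix_vector_mult
      assms[unfolded frechet_derivative_works] has_derivative_ident]
  by simp

lemma has_derivative_Jmat:
  assumes "A differentiable (at w)"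
  shows "((\<lambda>w. A w *v w) has_derivative (*v) (Jmat A w)) (at w)"
  using has_derivative_matrix_vector_self[OF assms] unfolding Jmat_def
  by (meson differentiable_def jacobian_works)

lemma Jmat_mult_vector:
  assumes "A differentiable (at w)"
  shows "Jmat A w *v h = A w *v h + frechet_derivative A (at w) h *v w"
  using has_derivative_unique[OF has_derivative_Jmat has_derivative_matrix_vector_self, OF assms assms]
  by meson

lemma frechet_derivative_radial_zero:
  fixes A :: "'a::real_normed_vector \<Rightarrow> 'b::real_normed_vector"
  assumes scale: "\<And>\<alpha> v. \<alpha> \<noteq> 0 \<Longrightarrow> A (\<alpha> *\<^sub>R v) = A v"
    and "A differentiable (at w)"
  shows "frechet_derivative A (at w) w = 0"
proof -
  have "((\<lambda>t::real. A (w + t *\<^sub>R w)) has_derivative (\<lambda>t. frechet_derivative A (at w) (t *\<^sub>R w))) (at 0)"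
    using assms(2) unfolding frechet_derivative_works
    by (auto intro!: derivative_eq_intros has_derivative_compose[of "\<lambda>t. w + t *\<^sub>R w" _ _ _ A, simplified o_def])
  moreover have "((\<lambda>t::real. A (w + t *\<^sub>R w)) has_derivative (\<lambda>t. 0)) (at 0)"
  proof (rule has_derivative_transform_within_open[of "\<lambda>t. A w" _ 0 UNIV "{t. t > -1}"])
    fix t :: real assume "t \<in> {t. t > -1}"
    then show "A w = A (w + t *\<^sub>R w)"
      using scale[of "1 + t" w] by (simp add: algebra_simps)
  qed (auto simp: open_Collect_less)
  ultimately show ?thesis
    using has_derivative_unique by (metis scaleR_one)
qed

lemma Jmat_mult_self:
  assumes "\<And>\<alpha> v. \<alpha> \<noteq> 0 \<Longrightarrow> A (\<alpha> *\<^sub>R v) = A v" "A differentiable (at w)"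
  shows "Jmat A w *v w = A w *v w"
  using Jmat_mult_vector[OF assms(2)] frechet_derivative_radial_zero[OF assms] by simp

lemma frechet_derivative_lipschitz_on_compact:
  fixes g :: "'a::euclidean_space \<Rightarrow> 'b::real_normed_vector"
  assumes "open S" "g differentiable_on S"
    and partials_diff: "\<And>b. b \<in> Basis \<Longrightarrow> (\<lambda>x. frechet_derivative g (at x) b) differentiable_on S"
    and partials_C1: "\<And>b c. b \<in> Basis \<Longrightarrow> c \<in> Basis \<Longrightarrow>
        continuous_on S (\<lambda>x. frechet_derivative (\<lambda>x. frechet_derivative g (at x) b) (at x) c)"
    and "compact K" "convex K" "K \<subseteq> S"
  obtains L where "L \<ge> 0" "\<And>x x' h. x \<in> K \<Longrightarrow> x' \<in> K \<Longrightarrow>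
    norm (frechet_derivative g (at x) h - frechet_derivative g (at x') h) \<le> L * norm (x - x') * norm h"
proof -
  define Dg where "Dg x = frechet_derivative g (at x)" for x
  have linear: "linear (Dg x)" if "x \<in> K" for x
    using assms(1,2,7) that unfolding Dg_def
    by (meson differentiable_on_eq_differentiable_at frechet_derivative_works has_derivative_linear subsetD)
  have "\<exists>L. L-lipschitz_on K (\<lambda>x. Dg x b)" if "b \<in> Basis" for b
    using lipschitz_on_continuous_partials[OF assms(1) partials_diff[OF that] partials_C1[OF that] assms(5-7)]
    unfolding Dg_def by blast
  then obtain Lb where Lb: "\<And>b. b \<in> Basis \<Longrightarrow> (Lb b)-lipschitz_on K (\<lambda>x. Dg x b)"
    using bchoice[of Basis "\<lambda>b L. L-lipschitz_on K (\<lambda>x. Dg x b)"] by blast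
  define L where "L = (\<Sum>b\<in>Basis. Lb b)"
  have "L \<ge> 0"
    unfolding L_def using Lb lipschitz_on_nonneg by (intro sum_nonneg) blast
  have "L-lipschitz_on K (\<lambda>x. Dg x b)" if "b \<in> Basis" for b
    using Lb[OF that] unfolding L_def
    by (rule lipschitz_on_le) (use Lb lipschitz_on_nonneg that in \<open>intro member_le_sum; auto\<close>)
  then have "norm (Dg x h - Dg x' h) \<le> (DIM('a) * L) * norm (x - x') * norm h"
    if "x \<in> K" "x' \<in> K" for x x' h
    using linear_family_lipschitz_Basis[OF linear[OF that(1)] linear[OF that(2)] _ that] by simp
  moreover have "DIM('a) * L \<ge> 0" using \<open>L \<ge> 0\<close> by simp
  ultimately show thesis using that unfolding Dg_def by blast
qed

lemma Jmat_lipschitz_of_bounds: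
  fixes A :: "real^'n \<Rightarrow> real^'n^'n"
  assumes "\<And>w. w \<in> K \<Longrightarrow> A differentiable (at w)"
    and LA: "LA-lipschitz_on K A"
    and DA_lipschitz: "\<And>w w' y. w \<in> K \<Longrightarrow> w' \<in> K \<Longrightarrow>
      norm (frechet_derivative A (at w) y - frechet_derivative A (at w') y) \<le> LD * norm (w - w') * norm y"
    and DA_bound: "\<And>w y. w \<in> K \<Longrightarrow> norm (frechet_derivative A (at w) y) \<le> B * norm y"
    and R: "\<And>w. w \<in> K \<Longrightarrow> norm w \<le> R" and "LD \<ge> 0"
    and Kb: "\<And>(M::real^'n^'n) x. norm (M *v x) \<le> norm M * norm x * Kb" "Kb \<ge> 0"
    and w: "w \<in> K" and w': "w' \<in> K"
  shows "norm (Jmat A w *v y - Jmat A w' *v y) \<le> (LA + LD * R + B) * Kb * norm (w - w') * norm y"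
proof -
  define DA where "DA w = frechet_derivative A (at w)" for w
  have "Jmat A w *v y - Jmat A w' *v y = (A w - A w') *v y + (DA w y - DA w' y) *v w + DA w' y *v (w - w')"
    unfolding DA_def Jmat_mult_vector[OF assms(1)[OF w]] Jmat_mult_vector[OF assms(1)[OF w']]
    by (simp add: algebra_simps)
  then have "norm (Jmat A w *v y - Jmat A w' *v y)
      \<le> norm (A w - A w') * norm y * Kb + norm (DA w y - DA w' y) * norm w * Kb
         + norm (DA w' y) * norm (w - w') * Kb"
    using Kb(1) by (metis (no_types, lifting) add_mono norm_triangle_le norm_triangle_ineq)
  also have "\<dots> \<le> (LA * norm (w - w')) * norm y * Kb + (LD * norm (w - w') * norm y) * R * Kb
      + (B * norm y) * norm (w - w') * Kb"
    using lipschitz_on_normD[OF LA w w'] DA_lipschitz[OF w w', of y] R[OF w] DA_bound[OF w', of y]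
      \<open>Kb \<ge> 0\<close> \<open>LD \<ge> 0\<close>
    unfolding DA_def by (intro add_mono mult_right_mono mult_mono) auto
  also have "\<dots> = (LA + LD * R + B) * Kb * norm (w - w') * norm y"
    by (simp add: algebra_simps)
  finally show ?thesis .
qed

lemma Jmat_lipschitz_on_compact:
  fixes A :: "real^'n \<Rightarrow> real^'n^'n"
  assumes "open S" "Ck_on 2 S A" "compact K" "convex K" "K \<subseteq> S"
  obtains L where "L \<ge> 0"
    "\<And>w w' y. w \<in> K \<Longrightarrow> w' \<in> K \<Longrightarrow> norm (Jmat A w *v y - Jmat A w' *v y) \<le> L * norm (w - w') * norm y"
proof -
  define DA where "DA w = frechet_derivative A (at w)" for w
  have A_diff: "A differentiable_on S"
    and partials_diff: "\<And>b. b \<in> Basis \<Longrightarrow> (\<lambda>w. DA w b) differentiable_on S"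
    and partials_C1: "\<And>b c. b \<in> Basis \<Longrightarrow> c \<in> Basis \<Longrightarrow>
        continuous_on S (\<lambda>x. frechet_derivative (\<lambda>w. DA w b) (at x) c)"
    using assms(2) by (auto simp: numeral_2_eq_2 DA_def)
  have partials_cont: "\<And>b. b \<in> Basis \<Longrightarrow> continuous_on S (\<lambda>w. frechet_derivative A (at w) b)"
    using partials_diff differentiable_imp_continuous_on unfolding DA_def by blast
  have A_diff_at: "A differentiable (at w)" if "w \<in> K" for w
    using A_diff assms(1,5) that by (meson differentiable_on_eq_differentiable_at subsetD)
  obtain LA where LA: "LA-lipschitz_on K A"
    using lipschitz_on_continuous_partials[OF assms(1) A_diff partials_cont assms(3-5)] .
  obtain LD where "LD \<ge> 0" and DA_lipschitz: "\<And>w w' y. w \<in> K \<Longrightarrow> w' \<in> K \<Longrightarrow>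
      norm (frechet_derivative A (at w) y - frechet_derivative A (at w') y) \<le> LD * norm (w - w') * norm y"
    using frechet_derivative_lipschitz_on_compact[OF assms(1) A_diff partials_diff[unfolded DA_def]
        partials_C1[unfolded DA_def] assms(3-5)] by blast
  obtain B where "B > 0" and DA_bound: "\<And>w y. w \<in> K \<Longrightarrow> norm (frechet_derivative A (at w) y) \<le> B * norm y"
    using frechet_derivative_bounded_on_compact[OF assms(1) A_diff partials_cont assms(3,5)] by blast
  obtain R where "R > 0" and R: "\<And>w. w \<in> K \<Longrightarrow> norm w \<le> R"
    using compact_imp_bounded[OF assms(3)] unfolding bounded_pos by blast
  obtain Kb where "Kb > 0" and Kb: "\<And>(M::real^'n^'n) x. norm (M *v x) \<le> norm M * norm x * Kb"
    using bounded_bilinear.pos_bounded[OF bounded_bilinear_matrix_vector_mult] by blast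
  show thesis
  proof (rule that)
    show "(LA + LD * R + B) * Kb \<ge> 0"
      using \<open>Kb > 0\<close> \<open>B > 0\<close> \<open>R > 0\<close> \<open>LD \<ge> 0\<close> lipschitz_on_nonneg[OF LA] by simp
    show "norm (Jmat A w *v y - Jmat A w' *v y) \<le> (LA + LD * R + B) * Kb * norm (w - w') * norm y"
      if "w \<in> K" "w' \<in> K" for w w' y
      using Jmat_lipschitz_of_bounds[OF A_diff_at LA DA_lipschitz DA_bound R \<open>LD \<ge> 0\<close> Kb _ that]
        \<open>Kb > 0\<close> by simp
  qed
qed

(* In the application, t = u \<bullet> d, W is the norm of the part of d orthogonal to the unit vector u,
   and n = norm (u + d). *)
lemma normalization_scalar_estimate:
  fixes t W D :: real
  assumes "W \<ge> 0" "D \<ge> 0" "D \<le> 1/2" "W\<^sup>2 + t\<^sup>2 = D\<^sup>2"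
  defines "n \<equiv> sqrt ((1 + t)\<^sup>2 + W\<^sup>2)"
  shows "\<bar>(1 + t) / n - 1\<bar> + \<bar>1 / n - 1\<bar> * W \<le> 5 * D\<^sup>2"
proof -
  have "t\<^sup>2 \<le> D\<^sup>2" "W\<^sup>2 \<le> D\<^sup>2"
    using assms(4) zero_le_power2[of t] zero_le_power2[of W] by linarith+
  have t: "\<bar>t\<bar> \<le> D"
    using abs_le_square_iff[of t D] \<open>t\<^sup>2 \<le> D\<^sup>2\<close> assms(2) by simp
  have WD: "W \<le> D"
    using power2_le_imp_le[OF \<open>W\<^sup>2 \<le> D\<^sup>2\<close> assms(2)] .
  have a: "1 + t \<ge> 1/2" using t assms(3) by linarith
  have na: "n \<ge> 1 + t"
    unfolding n_def by (rule real_le_rsqrt) simp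
  with a have "n > 0" by linarith
  have "n\<^sup>2 = (1 + t)\<^sup>2 + W\<^sup>2"
    unfolding n_def by (simp add: real_sqrt_pow2)
  then have "(n - (1 + t)) * (n + (1 + t)) = W\<^sup>2"
    by (simp add: algebra_simps power2_eq_square)
  moreover have "(n - (1 + t)) * 1 \<le> (n - (1 + t)) * (n + (1 + t))"
    using na a by (intro mult_left_mono) auto
  ultimately have gap: "n - (1 + t) \<le> W\<^sup>2" by simp
  have "D * D \<le> D * (1/2)"
    using assms(3,2) by (rule mult_left_mono)
  then have "W\<^sup>2 \<le> D / 2"
    using \<open>W\<^sup>2 \<le> D\<^sup>2\<close> by (simp add: power2_eq_square)
  have "(1 + t) / n - 1 = - ((n - (1 + t)) / n)"
    using \<open>n > 0\<close> by (simp add: field_simps)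
  then have "\<bar>(1 + t) / n - 1\<bar> = (n - (1 + t)) / n"
    using na \<open>n > 0\<close> by simp
  also have "\<dots> \<le> W\<^sup>2 / (1/2)"
    using gap na a by (intro frac_le) auto
  finally have first: "\<bar>(1 + t) / n - 1\<bar> \<le> 2 * D\<^sup>2"
    using \<open>W\<^sup>2 \<le> D\<^sup>2\<close> by simp
  have "\<bar>n - 1\<bar> \<le> 3/2 * D"
    using gap na t \<open>W\<^sup>2 \<le> D / 2\<close> by linarith
  then have "\<bar>n - 1\<bar> * W \<le> 3/2 * D * D"
    using WD assms(1) by (intro mult_mono) auto
  moreover have "\<bar>1 / n - 1\<bar> * W = \<bar>n - 1\<bar> * W / n"
    using \<open>n > 0\<close> by (simp add: field_simps abs_minus_commute)
  ultimately have "\<bar>1 / n - 1\<bar> * W \<le> (3/2 * D * D) / (1/2)"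
    using a na by (simp only:) (intro frac_le, auto)
  then have second: "\<bar>1 / n - 1\<bar> * W \<le> 3 * D\<^sup>2"
    by (simp add: power2_eq_square)
  from first second show ?thesis by linarith
qed

lemma sgn_unit_perturbation:
  fixes u d :: "'a::real_inner"
  assumes "norm u = 1" "norm d \<le> 1/2"
  shows "norm (sgn (u + d) - u - (d - (u \<bullet> d) *\<^sub>R u)) \<le> 5 * (norm d)\<^sup>2"
proof -
  define t where "t = u \<bullet> d"
  define w where "w = d - t *\<^sub>R u"
  have uu: "u \<bullet> u = 1" using assms(1) by (simp add: norm_eq_sqrt_inner)
  have uw: "u \<bullet> w = 0" by (simp add: w_def t_def inner_diff_right uu)
  have d: "d = t *\<^sub>R u + w" by (simp add: w_def)
  have norm_d: "(norm w)\<^sup>2 + t\<^sup>2 = (norm d)\<^sup>2"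
    unfolding power2_norm_eq_inner d
    by (simp add: inner_add_left inner_add_right uu uw inner_commute power2_eq_square)
  have norm_ud: "norm (u + d) = sqrt ((1 + t)\<^sup>2 + (norm w)\<^sup>2)"
    unfolding norm_eq_sqrt_inner d power2_norm_eq_inner
    by (simp add: inner_add_left inner_add_right uu uw inner_commute power2_eq_square algebra_simps)
  have "sgn (u + d) - u - w = ((1 + t) / norm (u + d) - 1) *\<^sub>R u + (1 / norm (u + d) - 1) *\<^sub>R w"
    unfolding sgn_div_norm by (subst (1) d) (simp add: algebra_simps divide_inverse)
  then have "norm (sgn (u + d) - u - w)
      \<le> \<bar>(1 + t) / norm (u + d) - 1\<bar> + \<bar>1 / norm (u + d) - 1\<bar> * norm w"
    using norm_triangle_ineq assms(1) by (metis mult.right_neutral norm_scaleR)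
  also have "\<dots> \<le> 5 * (norm d)\<^sup>2"
    unfolding norm_ud using assms(2) norm_d by (intro normalization_scalar_estimate) auto
  finally show ?thesis by (simp add: w_def t_def)
qed

lemma sgn_perturbation:
  fixes v d :: "'a::real_inner"
  assumes "norm v = 1" "\<mu> \<noteq> 0" "norm d \<le> 1 / (2 * \<bar>\<mu>\<bar>)"
  shows "norm (sgn ((1 / \<mu>) *\<^sub>R v + d) - sgn \<mu> *\<^sub>R v - \<bar>\<mu>\<bar> *\<^sub>R (d - (v \<bullet> d) *\<^sub>R v))
    \<le> 5 * \<mu>\<^sup>2 * (norm d)\<^sup>2"
proof -
  have "norm (\<mu> *\<^sub>R d) \<le> 1/2"
    using assms(2,3) by (simp add: field_simps)
  then have unit: "norm (sgn (v + \<mu> *\<^sub>R d) - v - (\<mu> *\<^sub>R d - (v \<bullet> (\<mu> *\<^sub>R d)) *\<^sub>R v))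
      \<le> 5 * (norm (\<mu> *\<^sub>R d))\<^sup>2"
    by (rule sgn_unit_perturbation[OF assms(1)])
  have "(1 / \<mu>) *\<^sub>R v + d = (1 / \<mu>) *\<^sub>R (v + \<mu> *\<^sub>R d)"
    using assms(2) by (simp add: algebra_simps)
  then have "sgn ((1 / \<mu>) *\<^sub>R v + d) = sgn \<mu> *\<^sub>R sgn (v + \<mu> *\<^sub>R d)"
    by (simp add: sgn_scaleR sgn_if)
  then have "sgn ((1 / \<mu>) *\<^sub>R v + d) - sgn \<mu> *\<^sub>R v - \<bar>\<mu>\<bar> *\<^sub>R (d - (v \<bullet> d) *\<^sub>R v)
      = sgn \<mu> *\<^sub>R (sgn (v + \<mu> *\<^sub>R d) - v - (\<mu> *\<^sub>R d - (v \<bullet> (\<mu> *\<^sub>R d)) *\<^sub>R v))"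
    using assms(2) by (simp add: abs_real_def sgn_if algebra_simps)
  then show ?thesis
    using unit assms(2) by (simp add: power_mult_distrib abs_sgn_eq)
qed

lemma norm_minus_projection_le:
  fixes u e :: "'a::real_inner"
  assumes "norm u = 1"
  shows "norm (e - (u \<bullet> e) *\<^sub>R u) \<le> norm e"
proof (rule power2_le_imp_le)
  have "u \<bullet> u = 1" using assms by (simp add: norm_eq_sqrt_inner)
  then have "(norm (e - (u \<bullet> e) *\<^sub>R u))\<^sup>2 = (norm e)\<^sup>2 - (u \<bullet> e)\<^sup>2"
    unfolding power2_norm_eq_inner by (simp add: inner_diff_left inner_diff_right inner_commute power2_eq_square)
  then show "(norm (e - (u \<bullet> e) *\<^sub>R u))\<^sup>2 \<le> (norm e)\<^sup>2" by simp
qed simp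

lemma sgn_first_order_expansion:
  fixes vstar h e :: "real^'n" and N :: "real^'n^'n"
  assumes unit: "norm vstar = 1" and "\<mu> \<noteq> 0" "KN > 0" "C1 \<ge> 0"
    and KN: "\<And>z. norm (N *v z) \<le> KN * norm z"
    and e: "norm e \<le> C1 * (norm h)\<^sup>2"
    and "norm h \<le> 1" "norm h \<le> 1 / (2 * \<bar>\<mu>\<bar> * (KN + C1))"
  shows "norm (sgn ((1 / \<mu>) *\<^sub>R vstar + N *v h + e) - sgn \<mu> *\<^sub>R vstar
      - (\<bar>\<mu>\<bar> *\<^sub>R ((mat 1 - outer vstar vstar) ** N)) *v h)
    \<le> (5 * \<mu>\<^sup>2 * (KN + C1)\<^sup>2 + \<bar>\<mu>\<bar> * C1) * (norm h)\<^sup>2"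
proof -
  define d where "d = N *v h + e"
  define P where "P x = x - (vstar \<bullet> x) *\<^sub>R vstar" for x
  have "norm d \<le> KN * norm h + C1 * (norm h)\<^sup>2"
    using norm_triangle_ineq[of "N *v h" e] KN[of h] e by (simp add: d_def)
  also have "\<dots> \<le> (KN + C1) * norm h"
    using \<open>norm h \<le> 1\<close> \<open>C1 \<ge> 0\<close> mult_left_mono[of "(norm h)\<^sup>2" "norm h" C1]
    by (simp add: power2_eq_square distrib_right mult_left_le_one_le)
  finally have d: "norm d \<le> (KN + C1) * norm h" .
  also have "\<dots> \<le> (KN + C1) * (1 / (2 * \<bar>\<mu>\<bar> * (KN + C1)))"
    using assms(3,4,8) by (intro mult_left_mono) auto
  also have "\<dots> = 1 / (2 * \<bar>\<mu>\<bar>)"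
    using assms(3,4) by simp
  finally have "norm d \<le> 1 / (2 * \<bar>\<mu>\<bar>)" .
  have "sgn ((1 / \<mu>) *\<^sub>R vstar + N *v h + e) - sgn \<mu> *\<^sub>R vstar
      - (\<bar>\<mu>\<bar> *\<^sub>R ((mat 1 - outer vstar vstar) ** N)) *v h
      = (sgn ((1 / \<mu>) *\<^sub>R vstar + d) - sgn \<mu> *\<^sub>R vstar - \<bar>\<mu>\<bar> *\<^sub>R P d) + \<bar>\<mu>\<bar> *\<^sub>R P e"
    by (simp add: projection_matrix_mult P_def d_def inner_add_right algebra_simps)
  then have "norm (sgn ((1 / \<mu>) *\<^sub>R vstar + N *v h + e) - sgn \<mu> *\<^sub>R vstar
      - (\<bar>\<mu>\<bar> *\<^sub>R ((mat 1 - outer vstar vstar) ** N)) *v h) \<le> 5 * \<mu>\<^sup>2 * (norm d)\<^sup>2 + \<bar>\<mu>\<bar> * norm e"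
    using sgn_perturbation[OF unit \<open>\<mu> \<noteq> 0\<close> \<open>norm d \<le> 1 / (2 * \<bar>\<mu>\<bar>)\<close>, folded P_def]
      norm_minus_projection_le[OF unit, of e, folded P_def]
    by (smt (verit) norm_triangle_ineq norm_scaleR abs_ge_zero mult_left_mono)
  also have "\<dots> \<le> 5 * \<mu>\<^sup>2 * ((KN + C1) * norm h)\<^sup>2 + \<bar>\<mu>\<bar> * (C1 * (norm h)\<^sup>2)"
    using d e by (intro add_mono mult_left_mono power_mono) auto
  also have "\<dots> = (5 * \<mu>\<^sup>2 * (KN + C1)\<^sup>2 + \<bar>\<mu>\<bar> * C1) * (norm h)\<^sup>2"
    unfolding power_mult_distrib by (simp add: algebra_simps)
  finally show ?thesis .
qed

lemma invertible_perturbation: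
  fixes M M' :: "real^'n^'n"
  assumes "invertible M" "K \<ge> 0"
    and inverse_bound: "\<And>y. norm (matrix_inv M *v y) \<le> K * norm y"
    and close: "\<And>y. norm (M' *v y - M *v y) \<le> \<epsilon> * norm y" and "\<epsilon> * K \<le> 1/2"
  shows invertible_perturbation_lower_bound: "norm y \<le> 2 * K * norm (M' *v y)"
    and invertible_perturbation_invertible: "invertible M'"
proof -
  have lower: "norm y \<le> 2 * K * norm (M' *v y)" for y
  proof -
    have "norm y \<le> K * norm (M *v y)"
      using inverse_bound[of "M *v y"] by (simp add: matrix_inv_mult_cancel_left[OF assms(1)])
    also have "\<dots> \<le> K * (norm (M' *v y) + \<epsilon> * norm y)"
      using close[of y] norm_triangle_ineq4[of "M' *v y" "M' *v y - M *v y"] \<open>K \<ge> 0\<close>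
      by (intro mult_left_mono) auto
    also have "\<dots> \<le> K * norm (M' *v y) + 1/2 * norm y"
      using \<open>\<epsilon> * K \<le> 1/2\<close> mult_right_mono[of "\<epsilon> * K" "1/2" "norm y"]
      by (simp add: algebra_simps)
    finally show ?thesis by simp
  qed
  then show "norm y \<le> 2 * K * norm (M' *v y)" .
  show "invertible M'"
    unfolding invertible_left_inverse matrix_left_invertible_ker
    using lower by (metis mult_zero_right norm_le_zero_iff norm_zero)
qed

locale shifted_inverse_iteration =
  fixes A :: "real^'n \<Rightarrow> real^'n^'n" and lam \<sigma> :: real and vstar :: "real^'n"
  assumes smooth: "Ck_on 3 (UNIV - {0}) A"
    and scale: "\<And>\<alpha> v. \<alpha> \<noteq> 0 \<Longrightarrow> A (\<alpha> *\<^sub>R v) = A v"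
    and eig: "A vstar *v vstar = lam *\<^sub>R vstar"
    and unit: "norm vstar = 1"
    and nonsing: "invertible (Jmat A vstar - \<sigma> *\<^sub>R mat 1)"
begin

lemma vstar_nonzero: "vstar \<noteq> 0"
  using unit by auto

lemma cball_vstar_nonzero: "w \<in> cball vstar (1/2) \<Longrightarrow> w \<noteq> 0"
  using unit by (auto simp: dist_norm)

lemma A_differentiable: "w \<noteq> 0 \<Longrightarrow> A differentiable (at w)"
  using smooth by (simp add: numeral_3_eq_3 differentiable_on_eq_differentiable_at open_delete)

lemma shifted_Jmat_vstar: "(Jmat A vstar - \<sigma> *\<^sub>R mat 1) *v vstar = (lam - \<sigma>) *\<^sub>R vstar"
  using Jmat_mult_self[OF scale A_differentiable[OF vstar_nonzero]] eig
  by (auto simp: matrix_vector_mult_diff_rdistrib scaleR_matrix_vector_assoc[symmetric] algebra_simps)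

lemma lam_neq_sigma: "lam \<noteq> \<sigma>"
proof
  assume "lam = \<sigma>"
  then have "(Jmat A vstar - \<sigma> *\<^sub>R mat 1) *v vstar = 0"
    using shifted_Jmat_vstar by simp
  then show False
    using matrix_inv_mult_cancel_left[OF nonsing, of vstar] vstar_nonzero by simp
qed

lemma Jmat_lipschitz_near_vstar:
  obtains L where "L \<ge> 0" "\<And>w w' y. w \<in> cball vstar (1/2) \<Longrightarrow> w' \<in> cball vstar (1/2) \<Longrightarrow>
    norm (Jmat A w *v y - Jmat A w' *v y) \<le> L * norm (w - w') * norm y"
proof -
  have "Ck_on 2 (UNIV - {0}) A"
    using smooth by (simp add: numeral_3_eq_3 Ck_on_SucD)
  moreover have "cball vstar (1/2) \<subseteq> UNIV - {0}"
    using cball_vstar_nonzero by blast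
  ultimately show thesis
    by (rule Jmat_lipschitz_on_compact[OF open_delete[OF open_UNIV] _ compact_cball convex_cball _ that])
qed

lemma eigen_residual_quadratic:
  assumes "L \<ge> 0"
    and lipschitz: "\<And>w w' y. w \<in> cball vstar (1/2) \<Longrightarrow> w' \<in> cball vstar (1/2) \<Longrightarrow>
      norm (Jmat A w *v y - Jmat A w' *v y) \<le> L * norm (w - w') * norm y"
    and v: "v \<in> cball vstar (1/2)"
  shows "norm (Jmat A v *v vstar - lam *\<^sub>R vstar) \<le> L * (norm (v - vstar))\<^sup>2"
proof -
  have "((\<lambda>w. A w *v w) has_derivative (*v) (Jmat A x)) (at x within cball vstar (1/2))"
    if "x \<in> cball vstar (1/2)" for x
    using has_derivative_Jmat[OF A_differentiable[OF cball_vstar_nonzero[OF that]]]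
    by (rule has_derivative_at_withinI)
  then have "norm ((A v *v v) - (A vstar *v vstar) - Jmat A v *v (v - vstar)) \<le> L * (norm (v - vstar))\<^sup>2"
    using v lipschitz \<open>L \<ge> 0\<close>
    by (intro linearization_error_lipschitz_derivative[where K = "cball vstar (1/2)"]) auto
  moreover have "(A v *v v) - (A vstar *v vstar) - Jmat A v *v (v - vstar) = Jmat A v *v vstar - lam *\<^sub>R vstar"
    using Jmat_mult_self[OF scale A_differentiable[OF cball_vstar_nonzero[OF v]]] eig
    by (simp add: matrix_vector_mult_diff_distrib)
  ultimately show ?thesis by simp
qed

lemma shifted_Jmat_psi_defect:
  assumes "invertible (Jmat A v - \<sigma> *\<^sub>R mat 1)"
  defines "N \<equiv> matrix_inv (Jmat A vstar - \<sigma> *\<^sub>R mat 1)"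
  shows "(Jmat A v - \<sigma> *\<^sub>R mat 1) *v (psi A \<sigma> v - (1 / (lam - \<sigma>)) *\<^sub>R vstar - N *v (v - vstar))
    = - ((1 / (lam - \<sigma>)) *\<^sub>R (Jmat A v *v vstar - lam *\<^sub>R vstar)
         + (Jmat A v - Jmat A vstar) *v (N *v (v - vstar)))"
proof -
  define x0 where "x0 = (1 / (lam - \<sigma>)) *\<^sub>R vstar + N *v (v - vstar)"
  have "Jmat A vstar *v vstar = lam *\<^sub>R vstar"
    using shifted_Jmat_vstar
    by (simp add: matrix_vector_mult_diff_rdistrib scaleR_matrix_vector_assoc[symmetric] algebra_simps)
  then have J_diff_x0: "(Jmat A v - Jmat A vstar) *v x0
      = (1 / (lam - \<sigma>)) *\<^sub>R (Jmat A v *v vstar - lam *\<^sub>R vstar) + (Jmat A v - Jmat A vstar) *v (N *v (v - vstar))"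
    by (simp add: x0_def matrix_vector_right_distrib matrix_vector_mult_scaleR matrix_vector_mult_diff_rdistrib)
  have "(Jmat A vstar - \<sigma> *\<^sub>R mat 1) *v x0 = v"
    using shifted_Jmat_vstar matrix_inv_mult_cancel_right[OF nonsing] lam_neq_sigma
    by (simp add: x0_def N_def matrix_vector_right_distrib matrix_vector_mult_scaleR)
  then have "(Jmat A v - \<sigma> *\<^sub>R mat 1) *v x0 = v + (Jmat A v - Jmat A vstar) *v x0"
    by (simp add: matrix_vector_mult_diff_rdistrib algebra_simps)
  moreover have "(Jmat A v - \<sigma> *\<^sub>R mat 1) *v psi A \<sigma> v = v"
    using matrix_inv_mult_cancel_right[OF assms(1)] by (simp add: psi_def)
  ultimately have "(Jmat A v - \<sigma> *\<^sub>R mat 1) *v (psi A \<sigma> v - x0) = - ((Jmat A v - Jmat A vstar) *v x0)"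
    by (simp add: matrix_vector_mult_diff_distrib)
  then show ?thesis
    unfolding J_diff_x0 unfolding x0_def by (simp add: diff_diff_eq)
qed

lemma psi_error_le:
  assumes "L \<ge> 0"
    and lipschitz: "\<And>w w' y. w \<in> cball vstar (1/2) \<Longrightarrow> w' \<in> cball vstar (1/2) \<Longrightarrow>
      norm (Jmat A w *v y - Jmat A w' *v y) \<le> L * norm (w - w') * norm y"
    and "KN > 0" and KN: "\<And>z. norm (matrix_inv (Jmat A vstar - \<sigma> *\<^sub>R mat 1) *v z) \<le> KN * norm z"
    and v: "v \<in> cball vstar (1/2)" and small: "L * norm (v - vstar) * KN \<le> 1/2"
  shows "norm (psi A \<sigma> v - (1 / (lam - \<sigma>)) *\<^sub>R vstar - matrix_inv (Jmat A vstar - \<sigma> *\<^sub>R mat 1) *v (v - vstar))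
    \<le> 2 * KN * (L / \<bar>lam - \<sigma>\<bar> + L * KN) * (norm (v - vstar))\<^sup>2"
proof -
  define \<mu> where "\<mu> = lam - \<sigma>"
  define N where "N = matrix_inv (Jmat A vstar - \<sigma> *\<^sub>R mat 1)"
  define Mv where "Mv = Jmat A v - \<sigma> *\<^sub>R mat 1"
  define h where "h = v - vstar"
  have J_close: "norm ((Jmat A v - Jmat A vstar) *v y) \<le> L * norm h * norm y" for y
    using lipschitz[OF v centre_in_cball[THEN iffD2], of y]
    by (simp add: h_def matrix_vector_mult_diff_rdistrib)
  then have "norm (Mv *v y - (Jmat A vstar - \<sigma> *\<^sub>R mat 1) *v y) \<le> L * norm h * norm y" for y
    by (simp add: Mv_def matrix_vector_mult_diff_rdistrib)
  note perturbation = nonsing less_imp_le[OF \<open>KN > 0\<close>] KN this small[folded h_def]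
  have "norm ((1 / \<mu>) *\<^sub>R (Jmat A v *v vstar - lam *\<^sub>R vstar) + (Jmat A v - Jmat A vstar) *v (N *v h))
      \<le> norm ((1 / \<mu>) *\<^sub>R (Jmat A v *v vstar - lam *\<^sub>R vstar)) + norm ((Jmat A v - Jmat A vstar) *v (N *v h))"
    by (rule norm_triangle_ineq)
  also have "\<dots> \<le> (1 / \<bar>\<mu>\<bar>) * (L * (norm h)\<^sup>2) + L * norm h * (KN * norm h)"
  proof (rule add_mono)
    show "norm ((1 / \<mu>) *\<^sub>R (Jmat A v *v vstar - lam *\<^sub>R vstar)) \<le> (1 / \<bar>\<mu>\<bar>) * (L * (norm h)\<^sup>2)"
      using eigen_residual_quadratic[OF \<open>L \<ge> 0\<close> lipschitz v] by (simp add: h_def divide_right_mono)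
    show "norm ((Jmat A v - Jmat A vstar) *v (N *v h)) \<le> L * norm h * (KN * norm h)"
      using J_close[of "N *v h"] KN[of h] \<open>L \<ge> 0\<close> unfolding N_def
      by (smt (verit) mult_left_mono zero_le_mult_iff norm_ge_zero)
  qed
  also have "\<dots> = (L / \<bar>\<mu>\<bar> + L * KN) * (norm h)\<^sup>2"
    by (simp add: power2_eq_square algebra_simps)
  finally have defect: "norm (Mv *v (psi A \<sigma> v - (1 / \<mu>) *\<^sub>R vstar - N *v h))
      \<le> (L / \<bar>\<mu>\<bar> + L * KN) * (norm h)\<^sup>2"
    using shifted_Jmat_psi_defect[OF invertible_perturbation_invertible[OF perturbation, unfolded Mv_def]]
    unfolding Mv_def N_def \<mu>_def h_def by (simp only: norm_minus_cancel)
  have "norm (psi A \<sigma> v - (1 / \<mu>) *\<^sub>R vstar - N *v h)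
      \<le> 2 * KN * norm (Mv *v (psi A \<sigma> v - (1 / \<mu>) *\<^sub>R vstar - N *v h))"
    unfolding N_def by (rule invertible_perturbation_lower_bound[OF perturbation])
  also have "\<dots> \<le> 2 * KN * ((L / \<bar>\<mu>\<bar> + L * KN) * (norm h)\<^sup>2)"
    using defect \<open>KN > 0\<close> by simp
  finally show ?thesis
    by (simp add: \<mu>_def N_def h_def)
qed

lemma psi_expansion:
  obtains C \<delta> where "C \<ge> 0" "\<delta> > 0" "\<And>v. norm (v - vstar) < \<delta> \<Longrightarrow>
    norm (psi A \<sigma> v - (1 / (lam - \<sigma>)) *\<^sub>R vstar - matrix_inv (Jmat A vstar - \<sigma> *\<^sub>R mat 1) *v (v - vstar))
      \<le> C * (norm (v - vstar))\<^sup>2"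
proof -
  obtain L where "L \<ge> 0" and lipschitz: "\<And>w w' y. w \<in> cball vstar (1/2) \<Longrightarrow> w' \<in> cball vstar (1/2) \<Longrightarrow>
      norm (Jmat A w *v y - Jmat A w' *v y) \<le> L * norm (w - w') * norm y"
    using Jmat_lipschitz_near_vstar by blast
  obtain KN where "KN > 0" and KN: "\<And>z. norm (matrix_inv (Jmat A vstar - \<sigma> *\<^sub>R mat 1) *v z) \<le> KN * norm z"
    using bounded_linear.pos_bounded[OF matrix_vector_mul_bounded_linear] by (metis mult.commute)
  define \<delta> where "\<delta> = min (1/2) (1 / (2 * KN * (L + 1)))"
  have "L * norm (v - vstar) * KN \<le> 1/2" if "norm (v - vstar) < \<delta>" for v
  proof -
    have "L * norm (v - vstar) * KN \<le> (L + 1) * (1 / (2 * KN * (L + 1))) * KN"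
      using that \<open>L \<ge> 0\<close> \<open>KN > 0\<close> by (intro mult_right_mono mult_mono) (auto simp: \<delta>_def)
    then show ?thesis
      using \<open>L \<ge> 0\<close> \<open>KN > 0\<close> by simp
  qed
  moreover have "v \<in> cball vstar (1/2)" if "norm (v - vstar) < \<delta>" for v
    using that by (simp add: \<delta>_def dist_norm norm_minus_commute)
  moreover have "2 * KN * (L / \<bar>lam - \<sigma>\<bar> + L * KN) \<ge> 0" "\<delta> > 0"
    using \<open>KN > 0\<close> \<open>L \<ge> 0\<close> by (simp_all add: \<delta>_def)
  ultimately show thesis
    using that psi_error_le[OF \<open>L \<ge> 0\<close> lipschitz \<open>KN > 0\<close> KN] by blast
qed

lemma phi_expansion:
  obtains C \<delta> where "\<delta> > 0" "\<And>v. norm (v - vstar) < \<delta> \<Longrightarrow>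
    norm (phi A \<sigma> v - sgn (lam - \<sigma>) *\<^sub>R vstar
      - (\<bar>lam - \<sigma>\<bar> *\<^sub>R ((mat 1 - outer vstar vstar) ** matrix_inv (Jmat A vstar - \<sigma> *\<^sub>R mat 1))) *v (v - vstar))
      \<le> C * (norm (v - vstar))\<^sup>2"
proof -
  define \<mu> where "\<mu> = lam - \<sigma>"
  define N where "N = matrix_inv (Jmat A vstar - \<sigma> *\<^sub>R mat 1)"
  have "\<mu> \<noteq> 0" using lam_neq_sigma by (simp add: \<mu>_def)
  obtain C1 \<delta>1 where "C1 \<ge> 0" "\<delta>1 > 0" and psi: "\<And>v. norm (v - vstar) < \<delta>1 \<Longrightarrow>
      norm (psi A \<sigma> v - (1 / \<mu>) *\<^sub>R vstar - N *v (v - vstar)) \<le> C1 * (norm (v - vstar))\<^sup>2"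
    using psi_expansion unfolding \<mu>_def N_def by blast
  obtain KN where "KN > 0" and KN: "\<And>z. norm (N *v z) \<le> KN * norm z"
    using bounded_linear.pos_bounded[OF matrix_vector_mul_bounded_linear[of N]] by (metis mult.commute)
  define \<delta> where "\<delta> = min (min \<delta>1 1) (1 / (2 * \<bar>\<mu>\<bar> * (KN + C1)))"
  have "norm (phi A \<sigma> v - sgn \<mu> *\<^sub>R vstar - (\<bar>\<mu>\<bar> *\<^sub>R ((mat 1 - outer vstar vstar) ** N)) *v (v - vstar))
      \<le> (5 * \<mu>\<^sup>2 * (KN + C1)\<^sup>2 + \<bar>\<mu>\<bar> * C1) * (norm (v - vstar))\<^sup>2"
    if "norm (v - vstar) < \<delta>" for v
  proof -
    define e where "e = psi A \<sigma> v - (1 / \<mu>) *\<^sub>R vstar - N *v (v - vstar)"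
    have "phi A \<sigma> v = sgn ((1 / \<mu>) *\<^sub>R vstar + N *v (v - vstar) + e)"
      by (simp add: phi_def sgn_div_norm divide_inverse e_def)
    moreover have "norm e \<le> C1 * (norm (v - vstar))\<^sup>2"
      using psi that by (simp add: e_def \<delta>_def)
    ultimately show ?thesis
      using sgn_first_order_expansion[OF unit \<open>\<mu> \<noteq> 0\<close> \<open>KN > 0\<close> \<open>C1 \<ge> 0\<close> KN] that
      by (simp add: \<delta>_def)
  qed
  moreover have "\<delta> > 0"
    using \<open>\<delta>1 > 0\<close> \<open>KN > 0\<close> \<open>C1 \<ge> 0\<close> \<open>\<mu> \<noteq> 0\<close> by (simp add: \<delta>_def)
  ultimately show thesis
    using that unfolding \<mu>_def N_def by blast
qed

end

theorem theorem3:
  fixes A :: "real^'n \<Rightarrow> real^'n^'n"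
    and lam \<sigma> :: real and vstar :: "real^'n"
  assumes sym: "\<And>v. transpose (A v) = A v"
    and smooth: "Ck_on 3 (UNIV - {0}) A"
    and scale: "\<And>\<alpha> v. \<alpha> \<noteq> 0 \<Longrightarrow> A (\<alpha> *\<^sub>R v) = A v"
    and eig: "A vstar *v vstar = lam *\<^sub>R vstar"
    and unit: "norm vstar = 1"
    and nonsing: "invertible (Jmat A vstar - \<sigma> *\<^sub>R mat 1)"
  shows "phi A \<sigma> differentiable (at vstar) \<and>
         jacobian (phi A \<sigma>) (at vstar) =
           \<bar>lam - \<sigma>\<bar> *\<^sub>R ((mat 1 - outer vstar vstar) ** matrix_inv (Jmat A vstar - \<sigma> *\<^sub>R mat 1)) \<and>
         (\<forall>v :: nat \<Rightarrow> real^'n.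
           (\<forall>k. invertible (Jmat A (v k) - \<sigma> *\<^sub>R mat 1)) \<longrightarrow>
           (\<forall>k. v (Suc k) = phi A \<sigma> (v k)) \<longrightarrow>
           (\<exists>C \<delta>. \<delta> > 0 \<and> (\<forall>k. norm (v k - vstar) < \<delta> \<longrightarrow>
              (\<sigma> < lam \<longrightarrow>
                 norm ((v (Suc k) - vstar) - jacobian (phi A \<sigma>) (at vstar) *v (v k - vstar))
                   \<le> C * (norm (v k - vstar))\<^sup>2) \<and>
              (\<sigma> > lam \<longrightarrow>
                 norm ((v (Suc k) + vstar) - jacobian (phi A \<sigma>) (at vstar) *v (v k - vstar))
                   \<le> C * (norm (v k - vstar))\<^sup>2))))"
proof -
  interpret shifted_inverse_iteration A lam \<sigma> vstar
    using smooth scale eig unit nonsing by unfold_locales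
  define D where "D = \<bar>lam - \<sigma>\<bar> *\<^sub>R ((mat 1 - outer vstar vstar) ** matrix_inv (Jmat A vstar - \<sigma> *\<^sub>R mat 1))"
  obtain C \<delta> where "\<delta> > 0" and expansion: "\<And>v. norm (v - vstar) < \<delta> \<Longrightarrow>
      norm (phi A \<sigma> v - sgn (lam - \<sigma>) *\<^sub>R vstar - D *v (v - vstar)) \<le> C * (norm (v - vstar))\<^sup>2"
    using phi_expansion unfolding D_def by blast
  have "phi A \<sigma> vstar = sgn (lam - \<sigma>) *\<^sub>R vstar"
    using expansion[of vstar] \<open>\<delta> > 0\<close> by simp
  then have "(phi A \<sigma> has_derivative (*v) D) (at vstar)"
    using expansion by (intro has_derivative_quadratic_remainder[OF _ \<open>\<delta> > 0\<close>]) auto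
  then have "phi A \<sigma> differentiable (at vstar)" "jacobian (phi A \<sigma>) (at vstar) = D"
    unfolding differentiable_def jacobian_def by (auto simp: frechet_derivative_at[symmetric])
  moreover have "\<sigma> < lam \<Longrightarrow> norm (phi A \<sigma> x - vstar - D *v (x - vstar)) \<le> C * (norm (x - vstar))\<^sup>2"
    and "lam < \<sigma> \<Longrightarrow> norm (phi A \<sigma> x + vstar - D *v (x - vstar)) \<le> C * (norm (x - vstar))\<^sup>2"
    if "norm (x - vstar) < \<delta>" for x
    using expansion[OF that] by (simp_all add: sgn_if)
  ultimately show ?thesis
    using \<open>\<delta> > 0\<close> unfolding D_def[symmetric] by (simp; blast)
qed

end
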